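(* Let $f$ be a real-valued symmetric ternary tensor in $(\mathbb{C}^3)^{\otimes 3}$, and suppose there exist $\beta,\gamma\in\mathbb{C}^3$ with $\beta\neq 0$, $\langle\beta,\beta\rangle=0$, and a complex symmetric ternary tensor $f_\beta$ with $\langle f_\beta,\beta\rangle=0$, such that $$f=f_\beta+\beta^{\otimes 2}\otimes\gamma+\beta\otimes\gamma\otimes\beta+\gamma\otimes\beta^{\otimes 2}.$$ Then there exist a $3\times 3$ real orthogonal matrix $T$ and $\lambda\in\mathbb{R}$ such that $T^{\otimes 3}f=\lambda\, e_3^{\otimes 3}$. In particular, $f=\alpha^{\otimes 3}$ for some $\alpha\in\mathbb{R}^3$.
   Context: Ternary signatures on a 3-element domain are identified with tensors in $(\mathbb{C}^3)^{\otimes 3}$; symmetric means invariant under permutation of the arguments. For $u,v\in\mathbb{C}^n$, $\langle u,v\rangle=\sum_j u_jv_j$ (bilinear, no conjugation). For a symmetric tensor $g$ of arity $r\ge1$ and a vector $u$, $\langle g,u\rangle$ is the arity-$(r-1)$ tensor obtained by contracting one (any) index of $g$ with $u$, i.e. $\langle g,u\rangle_{j_2\dots j_r}=\sum_{j} g_{j j_2\dots j_r}u_j$. $e_3=(0,0,1)^T$. *)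

theory Defs
  imports "HOL-Analysis.Analysis"
begin

text \<open>Index set of the 3-element domain: the numeral type 3 (elements 0,1,2, in this order).
  Vectors in C^3 are functions 3 => complex, ternary tensors are functions 3 => 3 => 3 => complex.\<close>

type_synonym cvec3 = "3 \<Rightarrow> complex"
type_synonym ctensor3 = "3 \<Rightarrow> 3 \<Rightarrow> 3 \<Rightarrow> complex"

definition sym_tensor3 :: "ctensor3 \<Rightarrow> bool" where
  "sym_tensor3 f \<longleftrightarrow> (\<forall>i j k. f i j k = f j i k \<and> f i j k = f i k j \<and> f i j k = f k j i
      \<and> f i j k = f j k i \<and> f i j k = f k i j)"

definition real_tensor3 :: "ctensor3 \<Rightarrow> bool" where
  "real_tensor3 f \<longleftrightarrow> (\<forall>i j k. f i j k \<in> \<real>)"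

text \<open>Bilinear form (no conjugation).\<close>
definition bil :: "cvec3 \<Rightarrow> cvec3 \<Rightarrow> complex" where
  "bil u v = (\<Sum>j\<in>UNIV. u j * v j)"

definition contract3 :: "ctensor3 \<Rightarrow> cvec3 \<Rightarrow> (3 \<Rightarrow> 3 \<Rightarrow> complex)" where
  "contract3 g u = (\<lambda>j2 j3. \<Sum>j\<in>UNIV. g j j2 j3 * u j)"

definition tprod3 :: "cvec3 \<Rightarrow> cvec3 \<Rightarrow> cvec3 \<Rightarrow> ctensor3" where
  "tprod3 a b c = (\<lambda>i j k. a i * b j * c k)"

definition mat_act3 :: "real^3^3 \<Rightarrow> ctensor3 \<Rightarrow> ctensor3" where
  "mat_act3 T f = (\<lambda>a b c. \<Sum>i\<in>UNIV. \<Sum>j\<in>UNIV. \<Sum>k\<in>UNIV.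
      of_real (T$a$i) * of_real (T$b$j) * of_real (T$c$k) * f i j k)"

text \<open>e_3, the third standard basis vector (index 2 of the type 3 = {0,1,2}).\<close>
definition e3 :: cvec3 where
  "e3 = (\<lambda>i. if i = 2 then 1 else 0)"

end

theory Submission
  imports Defs
begin

text \<open>Contracting the decomposition with the isotropic vector \<open>\<beta>\<close> gives
  \<open>\<langle>f,\<beta>\<rangle> = \<langle>\<gamma>,\<beta>\<rangle> \<beta>\<otimes>\<beta>\<close>. As \<open>f\<close> is real and symmetric, evaluating \<open>f\<close> on
  \<open>\<beta> \<otimes> \<beta>\<^sup>* \<otimes> \<beta>\<^sup>*\<close> in two ways yields \<open>\<langle>\<gamma>,\<beta>\<rangle> |\<beta>|\<^sup>4 = 0\<close>, so \<open>\<langle>f,\<beta>\<rangle> = 0\<close>; by reality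
  \<open>f\<close> is then annihilated by \<open>Re \<beta>\<close> and \<open>Im \<beta>\<close>, which are orthogonal and nonzero because
  \<open>\<langle>\<beta>,\<beta>\<rangle> = 0\<close>. Completing their normalisations by the cross product to an orthonormal frame
  \<open>u, t, v\<close>, the tensor \<open>f\<close> is killed by \<open>u\<close> and \<open>v\<close> in the first slot, hence has the form
  \<open>t \<otimes> c\<close>, and symmetry forces \<open>f = \<mu> t\<otimes>t\<otimes>t\<close> with \<open>\<mu>\<close> real. The orthogonal matrix with
  rows \<open>u, t, v\<close> maps \<open>t\<close> to \<open>e\<^sub>3\<close>.\<close>

lemma orthogonal_matrix_row_inner:
  fixes T :: "real^'n^'n"
  assumes "orthogonal_matrix T"
  shows "(\<Sum>i\<in>UNIV. T$p$i * T$q$i) = (if p = q then 1 else 0)"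
  using arg_cong[OF conjunct2[OF assms[unfolded orthogonal_matrix_def]], of "\<lambda>M. M$p$q"]
  by (simp add: matrix_matrix_mult_def transpose_def mat_def)

lemma orthogonal_matrix_column_inner:
  fixes T :: "real^'n^'n"
  assumes "orthogonal_matrix T"
  shows "(\<Sum>p\<in>UNIV. T$p$x * T$p$y) = (if x = y then 1 else 0)"
  using arg_cong[OF conjunct1[OF assms[unfolded orthogonal_matrix_def]], of "\<lambda>M. M$x$y"]
  by (simp add: matrix_matrix_mult_def transpose_def mat_def)

lemma orthogonal_matrix_expansion:
  fixes T :: "real^'n^'n" and v :: "'n \<Rightarrow> complex"
  assumes "orthogonal_matrix T"
  shows "v x = (\<Sum>p\<in>UNIV. of_real (T$p$x) * (\<Sum>y\<in>UNIV. of_real (T$p$y) * v y))"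
proof -
  have "(\<Sum>p\<in>UNIV. of_real (T$p$x) * (\<Sum>y\<in>UNIV. of_real (T$p$y) * v y))
      = (\<Sum>p\<in>UNIV. \<Sum>y\<in>UNIV. of_real (T$p$x) * of_real (T$p$y) * v y)"
    by (simp add: sum_distrib_left mult.assoc)
  also have "\<dots> = (\<Sum>y\<in>UNIV. \<Sum>p\<in>UNIV. of_real (T$p$x) * of_real (T$p$y) * v y)"
    by (rule sum.swap)
  also have "\<dots> = (\<Sum>y\<in>UNIV. of_real (\<Sum>p\<in>UNIV. T$p$x * T$p$y) * v y)"
    by (simp add: sum_distrib_right)
  also have "\<dots> = v x"
    by (simp add: orthogonal_matrix_column_inner[OF assms] if_distrib[of complex_of_real]
        if_distrib[of "\<lambda>c. c * _"] cong: if_cong)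
  finally show ?thesis ..
qed

lemma orthogonal_matrix_expansion_single:
  fixes T :: "real^'n^'n" and v :: "'n \<Rightarrow> complex"
  assumes "orthogonal_matrix T"
    and "\<And>p. p \<noteq> q \<Longrightarrow> (\<Sum>y\<in>UNIV. of_real (T$p$y) * v y) = 0"
  shows "v x = of_real (T$q$x) * (\<Sum>y\<in>UNIV. of_real (T$q$y) * v y)"
  using orthogonal_matrix_expansion[OF assms(1), of v x]
    sum.remove[of UNIV q "\<lambda>p. of_real (T$p$x) * (\<Sum>y\<in>UNIV. of_real (T$p$y) * v y)"]
  by (simp add: assms(2))

text \<open>In the index type \<open>3\<close> the numeral \<open>3\<close> denotes the index \<open>0\<close>; the frame is arranged so that
  the cross product occupies row \<open>2\<close>, the index of \<open>e3\<close>.\<close>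

lemma orthogonal_matrix_extend_orthogonal_pair:
  fixes a b :: "real^3"
  assumes "a \<noteq> 0" and "b \<noteq> 0" and "a \<bullet> b = 0"
  obtains T :: "real^3^3"
  where "orthogonal_matrix T" and "T$1 = a /\<^sub>R norm a" and "T$3 = b /\<^sub>R norm b"
proof -
  define u v where "u = a /\<^sub>R norm a" and "v = b /\<^sub>R norm b"
  have "norm u = 1" "norm v = 1" "u \<bullet> v = 0"
    using assms by (simp_all add: u_def v_def)
  moreover from this have "(norm (cross3 u v))\<^sup>2 = 1"
    using norm_cross_dot[of u v] by simp
  then have "norm (cross3 u v) = 1"
    using norm_ge_zero[of "cross3 u v"] by (auto simp: power2_eq_1_iff)
  moreover have "u \<bullet> (cross3 u v) = 0" "v \<bullet> (cross3 u v) = 0"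
    by (simp_all add: dot_cross_self inner_commute[of v])
  ultimately have "orthogonal_matrix (vector [u, cross3 u v, v] :: real^3^3)"
    unfolding orthogonal_matrix_orthonormal_rows
    by (auto simp: row_def forall_3 orthogonal_def inner_commute vec_lambda_eta)
  then show ?thesis
    by (rule that) (simp_all add: u_def v_def)
qed

lemma sym_tensor3_factor_first_slot:
  assumes "sym_tensor3 f" and "bil t t = 1" and f_eq: "\<And>i j k. f i j k = t i * c j k"
  shows "f = (\<lambda>i j k. (\<Sum>i'\<in>UNIV. \<Sum>j'\<in>UNIV. \<Sum>k'\<in>UNIV. t i' * t j' * t k' * f i' j' k')
                      * tprod3 t t t i j k)"
proof -
  have tt: "(\<Sum>i\<in>UNIV. t i * t i) = 1"
    using assms(2) by (simp add: bil_def)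
  have swap: "t i * c j k = t j * c k i" for i j k
    using assms(1) by (simp add: sym_tensor3_def flip: f_eq)
  define d where "d k = (\<Sum>i\<in>UNIV. t i * c k i)" for k
  have c_eq: "c j k = t j * d k" for j k
  proof -
    have "c j k = (\<Sum>i\<in>UNIV. t i * (t i * c j k))"
      by (simp add: sum_distrib_right[symmetric] mult.assoc[symmetric] tt)
    also have "\<dots> = t j * d k"
      by (simp only: swap[of _ j k]) (simp add: d_def sum_distrib_left algebra_simps)
    finally show ?thesis .
  qed
  define \<nu> where "\<nu> = (\<Sum>i\<in>UNIV. t i * d i)"
  have "c j k = t j * t k * \<nu>" for j k
  proof -
    have "c j k = (\<Sum>i\<in>UNIV. t i * (t i * c j k))"
      by (simp add: sum_distrib_right[symmetric] mult.assoc[symmetric] tt)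
    also have "\<dots> = (\<Sum>i\<in>UNIV. t i * (t j * (t k * d i)))"
      by (simp only: swap[of _ j k]) (simp only: c_eq)
    also have "\<dots> = t j * t k * \<nu>"
      by (simp add: \<nu>_def sum_distrib_left algebra_simps)
    finally show ?thesis .
  qed
  then have f_cube: "f i j k = \<nu> * t i * t j * t k" for i j k
    by (simp add: f_eq algebra_simps)
  have "(\<Sum>i\<in>UNIV. \<Sum>j\<in>UNIV. \<Sum>k\<in>UNIV. t i * t j * t k * f i j k)
      = \<nu> * (\<Sum>i\<in>UNIV. t i * t i) * (\<Sum>j\<in>UNIV. t j * t j) * (\<Sum>k\<in>UNIV. t k * t k)"
    by (simp add: f_cube sum_distrib_left sum_distrib_right algebra_simps)
  then show ?thesis
    by (simp add: tt fun_eq_iff f_cube tprod3_def mult.assoc)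
qed

lemma sym_tensor3_eq_cube_of_orthogonal_row:
  assumes "orthogonal_matrix T" and "sym_tensor3 f"
    and kernel: "\<And>p j k. p \<noteq> q \<Longrightarrow> (\<Sum>i\<in>UNIV. of_real (T$p$i) * f i j k) = 0"
  defines "t \<equiv> \<lambda>i. complex_of_real (T$q$i)"
  shows "f = (\<lambda>i j k. (\<Sum>i'\<in>UNIV. \<Sum>j'\<in>UNIV. \<Sum>k'\<in>UNIV. t i' * t j' * t k' * f i' j' k')
                      * tprod3 t t t i j k)"
proof (rule sym_tensor3_factor_first_slot[OF assms(2)])
  show "bil t t = 1"
    using orthogonal_matrix_row_inner[OF assms(1), of q q]
    by (simp add: bil_def t_def flip: of_real_mult of_real_sum)
  show "f i j k = t i * (\<Sum>i'\<in>UNIV. t i' * f i' j k)" for i j k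
    unfolding t_def by (rule orthogonal_matrix_expansion_single[OF assms(1) kernel])
qed

lemma mat_act3_scaled_tprod3:
  "mat_act3 T (\<lambda>i j k. \<mu> * tprod3 u v w i j k)
     = (\<lambda>a b c. \<mu> * tprod3 (\<lambda>a. \<Sum>i\<in>UNIV. of_real (T$a$i) * u i)
                           (\<lambda>b. \<Sum>j\<in>UNIV. of_real (T$b$j) * v j)
                           (\<lambda>c. \<Sum>k\<in>UNIV. of_real (T$c$k) * w k) a b c)"
  by (simp add: fun_eq_iff mat_act3_def tprod3_def sum_3 algebra_simps)

lemma mat_act3_cube_of_row:
  fixes T :: "real^3^3"
  assumes "orthogonal_matrix T"
  defines "t \<equiv> \<lambda>i. complex_of_real (T$2$i)"
  shows "mat_act3 T (\<lambda>i j k. \<mu> * tprod3 t t t i j k) = (\<lambda>i j k. \<mu> * tprod3 e3 e3 e3 i j k)"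
proof -
  have "(\<lambda>a. \<Sum>i\<in>UNIV. of_real (T$a$i) * t i) = e3"
    using orthogonal_matrix_row_inner[OF assms(1)]
    by (simp add: fun_eq_iff e3_def t_def flip: of_real_mult of_real_sum)
  then show ?thesis
    by (simp add: mat_act3_scaled_tprod3)
qed

lemma real_scaled_cube_eq_tprod3:
  fixes m :: real and u :: "3 \<Rightarrow> real"
  shows "(\<lambda>i j k. of_real m * tprod3 (\<lambda>i. of_real (u i)) (\<lambda>i. of_real (u i)) (\<lambda>i. of_real (u i)) i j k)
       = tprod3 (\<lambda>i. of_real (root 3 m * u i)) (\<lambda>i. of_real (root 3 m * u i)) (\<lambda>i. of_real (root 3 m * u i))"
proof -
  have "root 3 m * root 3 m * root 3 m = m"
    by (simp add: odd_real_root_pow flip: power3_eq_cube)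
  then show ?thesis
    by (simp add: tprod3_def fun_eq_iff mult_ac flip: of_real_mult)
qed

lemma contract3_isotropic_decomposition:
  assumes "bil \<beta> \<beta> = 0" and "contract3 f\<beta> \<beta> = (\<lambda>_ _. 0)"
    and "f = (\<lambda>i j k. f\<beta> i j k + tprod3 \<beta> \<beta> \<gamma> i j k + tprod3 \<beta> \<gamma> \<beta> i j k + tprod3 \<gamma> \<beta> \<beta> i j k)"
  shows "contract3 f \<beta> = (\<lambda>j k. bil \<gamma> \<beta> * \<beta> j * \<beta> k)"
proof (intro ext)
  fix j k
  have "contract3 f \<beta> j k = contract3 f\<beta> \<beta> j k + bil \<beta> \<beta> * \<beta> j * \<gamma> k
      + bil \<beta> \<beta> * \<gamma> j * \<beta> k + bil \<gamma> \<beta> * \<beta> j * \<beta> k"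
    by (simp add: assms(3) contract3_def tprod3_def bil_def sum_3 algebra_simps)
  then show "contract3 f \<beta> j k = bil \<gamma> \<beta> * \<beta> j * \<beta> k"
    using assms(1,2) by simp
qed

lemma real_sym_tensor3_isotropic_contract_coeff_eq_0:
  assumes "real_tensor3 f" and "sym_tensor3 f" and "\<beta> \<noteq> (\<lambda>_. 0)" and "bil \<beta> \<beta> = 0"
    and ctr: "contract3 f \<beta> = (\<lambda>j k. g * \<beta> j * \<beta> k)"
  shows "g = 0"
proof -
  have f_cnj: "cnj (f i j k) = f i j k" for i j k
    using assms(1) by (simp add: real_tensor3_def Reals_cnj_iff)
  have ctrA: "(\<Sum>i\<in>UNIV. f i j k * \<beta> i) = g * \<beta> j * \<beta> k" for j k
    using fun_cong[OF fun_cong[OF ctr, of j], of k] by (simp add: contract3_def)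
  have ctrB: "(\<Sum>j\<in>UNIV. f i j k * cnj (\<beta> j)) = cnj g * cnj (\<beta> i) * cnj (\<beta> k)" for i k
  proof -
    have "(\<Sum>j\<in>UNIV. f i j k * cnj (\<beta> j)) = cnj (\<Sum>j\<in>UNIV. f j i k * \<beta> j)"
      using assms(2) by (simp add: f_cnj sym_tensor3_def)
    then show ?thesis by (simp add: ctrA)
  qed
  define N where "N = (\<Sum>i\<in>UNIV. \<beta> i * cnj (\<beta> i))"
  \<comment> \<open>Evaluate \<open>\<Sum> f\<^sub>i\<^sub>j\<^sub>k \<beta>\<^sub>i \<beta>\<^sub>j\<^sup>* \<beta>\<^sub>k\<^sup>*\<close> by contracting the first, resp. the second, slot first.\<close>
  have "g * N\<^sup>2 = (\<Sum>j\<in>UNIV. \<Sum>k\<in>UNIV. (\<Sum>i\<in>UNIV. f i j k * \<beta> i) * (cnj (\<beta> j) * cnj (\<beta> k)))"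
    by (simp only: ctrA) (simp add: N_def sum_3 algebra_simps power2_eq_square)
  also have "\<dots> = (\<Sum>i\<in>UNIV. \<Sum>k\<in>UNIV. (\<Sum>j\<in>UNIV. f i j k * cnj (\<beta> j)) * (\<beta> i * cnj (\<beta> k)))"
    by (simp add: sum_3 algebra_simps)
  also have "\<dots> = cnj g * N * cnj (bil \<beta> \<beta>)"
    by (simp only: ctrB) (simp add: N_def bil_def sum_3 algebra_simps)
  finally have "g * N\<^sup>2 = 0"
    using assms(4) by simp
  moreover have "N \<noteq> 0"
  proof -
    obtain i0 where "\<beta> i0 \<noteq> 0"
      using assms(3) by auto
    then have "0 < (cmod (\<beta> i0))\<^sup>2"
      by simp
    also have "\<dots> \<le> (\<Sum>i\<in>UNIV. (cmod (\<beta> i))\<^sup>2)"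
      by (rule member_le_sum) auto
    also have "\<dots> = Re N"
      by (simp add: N_def complex_mult_cnj cmod_power2)
    finally show ?thesis
      by auto
  qed
  ultimately show "g = 0"
    by simp
qed

lemma contract3_Re_Im:
  assumes "real_tensor3 f" and "contract3 f \<beta> = (\<lambda>_ _. 0)"
  shows "contract3 f (\<lambda>i. of_real (Re (\<beta> i))) = (\<lambda>_ _. 0)"
    and "contract3 f (\<lambda>i. of_real (Im (\<beta> i))) = (\<lambda>_ _. 0)"
proof -
  have f_real: "Im (f i j k) = 0" for i j k
    using assms(1) by (simp add: real_tensor3_def complex_is_Real_iff)
  have "Re (contract3 f \<beta> j k) = 0" "Im (contract3 f \<beta> j k) = 0" for j k
    using assms(2) by simp_all
  then show "contract3 f (\<lambda>i. of_real (Re (\<beta> i))) = (\<lambda>_ _. 0)"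
    and "contract3 f (\<lambda>i. of_real (Im (\<beta> i))) = (\<lambda>_ _. 0)"
    by (auto simp: contract3_def complex_eq_iff f_real fun_eq_iff)
qed

lemma isotropic_Re_Im_orthogonal:
  assumes "bil \<beta> \<beta> = 0" and "\<beta> \<noteq> (\<lambda>_. 0)"
  defines "a \<equiv> \<chi> i. Re (\<beta> i)" and "b \<equiv> \<chi> i. Im (\<beta> i)"
  shows "a \<bullet> b = 0" and "a \<noteq> 0" and "b \<noteq> 0"
proof -
  have "Re (bil \<beta> \<beta>) = 0" "Im (bil \<beta> \<beta>) = 0"
    using assms(1) by simp_all
  then have aa_bb: "a \<bullet> a = b \<bullet> b" and ab: "a \<bullet> b = 0"
    by (simp_all add: a_def b_def bil_def inner_vec_def sum_3 algebra_simps)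
  show "a \<bullet> b = 0"
    by (fact ab)
  have "a \<noteq> 0 \<or> b \<noteq> 0"
    using assms(2) by (auto simp: a_def b_def vec_eq_iff complex_eq_iff)
  then show "a \<noteq> 0" and "b \<noteq> 0"
    using aa_bb by auto
qed

lemma real_tensor3_orthonormal_kernel_frame:
  assumes "real_tensor3 f" and "\<beta> \<noteq> (\<lambda>_. 0)" and "bil \<beta> \<beta> = 0"
    and "contract3 f \<beta> = (\<lambda>_ _. 0)"
  obtains T :: "real^3^3"
  where "orthogonal_matrix T" and "\<And>p j k. p \<noteq> 2 \<Longrightarrow> (\<Sum>i\<in>UNIV. of_real (T$p$i) * f i j k) = 0"
proof -
  define a b :: "real^3" where "a = (\<chi> i. Re (\<beta> i))" and "b = (\<chi> i. Im (\<beta> i))"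
  have a_b_kernel: "contract3 f (\<lambda>i. of_real (a$i)) = (\<lambda>_ _. 0)"
      "contract3 f (\<lambda>i. of_real (b$i)) = (\<lambda>_ _. 0)"
    using contract3_Re_Im[OF assms(1,4)] by (simp_all add: a_def b_def)
  have ab: "a \<bullet> b = 0" "a \<noteq> 0" "b \<noteq> 0"
    using isotropic_Re_Im_orthogonal[OF assms(3,2)] unfolding a_def b_def .
  obtain T where T: "orthogonal_matrix T" "T$1 = a /\<^sub>R norm a" "T$3 = b /\<^sub>R norm b"
    using orthogonal_matrix_extend_orthogonal_pair[OF ab(2,3,1)] .
  have "(\<Sum>i\<in>UNIV. of_real (T$p$i) * f i j k) = 0" if "p \<noteq> 2" for p j k
    using that a_b_kernel exhaust_3[of p]
    by (auto simp: T fun_eq_iff contract3_def mult.assoc mult.commute[of "f _ _ _"] simp flip: sum_distrib_left)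
  with T(1) show ?thesis
    by (rule that)
qed

theorem mainTheorem4:
  fixes f f\<beta> :: ctensor3 and \<beta> \<gamma> :: cvec3
  assumes "real_tensor3 f" and "sym_tensor3 f"
    and "\<beta> \<noteq> (\<lambda>_. 0)" and "bil \<beta> \<beta> = 0"
    and "sym_tensor3 f\<beta>" and "contract3 f\<beta> \<beta> = (\<lambda>_ _. 0)"
    and "f = (\<lambda>i j k. f\<beta> i j k + tprod3 \<beta> \<beta> \<gamma> i j k + tprod3 \<beta> \<gamma> \<beta> i j k + tprod3 \<gamma> \<beta> \<beta> i j k)"
  shows "(\<exists>T :: real^3^3. \<exists>lam::real. orthogonal_matrix T \<and>
            mat_act3 T f = (\<lambda>i j k. of_real lam * tprod3 e3 e3 e3 i j k))
       \<and> (\<exists>\<alpha> :: cvec3. (\<forall>i. \<alpha> i \<in> \<real>) \<and> f = tprod3 \<alpha> \<alpha> \<alpha>)"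
proof -
  have ctr: "contract3 f \<beta> = (\<lambda>j k. bil \<gamma> \<beta> * \<beta> j * \<beta> k)"
    using contract3_isotropic_decomposition[OF assms(4,6,7)] .
  then have "bil \<gamma> \<beta> = 0"
    by (rule real_sym_tensor3_isotropic_contract_coeff_eq_0[OF assms(1-4)])
  with ctr have "contract3 f \<beta> = (\<lambda>_ _. 0)"
    by simp
  then obtain T where T: "orthogonal_matrix T"
    and kernel: "\<And>p j k. p \<noteq> 2 \<Longrightarrow> (\<Sum>i\<in>UNIV. of_real (T$p$i) * f i j k) = 0"
    using real_tensor3_orthonormal_kernel_frame[OF assms(1,3,4)] by blast
  define t where "t = (\<lambda>i. complex_of_real (T$2$i))"
  define \<mu> where "\<mu> = (\<Sum>i\<in>UNIV. \<Sum>j\<in>UNIV. \<Sum>k\<in>UNIV. t i * t j * t k * f i j k)"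
  have "f = (\<lambda>i j k. \<mu> * tprod3 t t t i j k)"
    unfolding \<mu>_def t_def using sym_tensor3_eq_cube_of_orthogonal_row[OF T assms(2) kernel] .
  moreover have "\<mu> \<in> \<real>"
    using assms(1) by (simp add: \<mu>_def t_def real_tensor3_def)
  ultimately obtain m where f_m: "f = (\<lambda>i j k. of_real m * tprod3 t t t i j k)"
    by (auto elim: Reals_cases)
  show ?thesis
  proof (intro conjI exI)
    show "mat_act3 T f = (\<lambda>i j k. of_real m * tprod3 e3 e3 e3 i j k)"
      unfolding f_m t_def by (rule mat_act3_cube_of_row[OF T])
    show "f = tprod3 (\<lambda>i. of_real (root 3 m * T$2$i)) (\<lambda>i. of_real (root 3 m * T$2$i))
        (\<lambda>i. of_real (root 3 m * T$2$i))"
      unfolding f_m t_def by (rule real_scaled_cube_eq_tprod3)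
  qed (use T in auto)
qed

end
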